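(* Let $X$ be a locale with frame presentation $\mathcal{O}X=\langle G\mid R\rangle$, and regard $\mathcal{O}X$ as the locale whose frame is the Scott topology on the complete lattice $\mathcal{O}X$. If there exists a semi-open quotient locale map $e\colon\Sigma^{\Sigma^G}\to\mathcal{O}X$, then $X$ is locally compact (equivalently, $\mathcal{O}X$ is a continuous dcpo).
   Context: Frames are complete lattices with finite meets distributing over arbitrary joins; a locale $X$ is a frame $\mathcal{O}X$ and a locale map $f\colon X\to Y$ is a frame homomorphism $f^*\colon\mathcal{O}Y\to\mathcal{O}X$. $\Sigma$ is the Sierpiński locale; for a set $G$, $\Sigma^G$ is the locale whose frame is the free frame on $G$, and $\Sigma^{\Sigma^G}$ is its exponential (the locale of Scott opens of the free frame on $G$). A presentation $\mathcal{O}X=\langle G\mid R\rangle$ means $\mathcal{O}X$ is the quotient of the free frame on $G$ by the congruence generated by $R$. Scott topology: $V$ open iff upward closed and whenever the join of a directed set lies in $V$, some member does. A locale map $e\colon Y\to Z$ is a semi-open quotient if $e^*$ has a suplattice retraction, i.e. a map $r\colon\mathcal{O}Y\to\mathcal{O}Z$ preserving arbitrary joins with $r\circ e^*=\mathrm{id}$. Way-below: $a\ll b$ iff whenever $b\le\bigvee D$ with $D$ directed, $a\le d$ for some $d\in D$; a dcpo is continuous if each $b$ is the directed join of $\{a\mid a\ll b\}$. A locale $X$ is locally compact iff $\mathcal{O}X$ is continuous. *)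

theory Defs
  imports Main
begin

definition is_frame :: "'a::complete_lattice itself \<Rightarrow> bool" where
  "is_frame _ \<longleftrightarrow> (\<forall>(a::'a) S. inf a (Sup S) = Sup ((inf a) ` S))"

definition directed_set :: "'a::order set \<Rightarrow> bool" where
  "directed_set D \<longleftrightarrow> D \<noteq> {} \<and> (\<forall>x\<in>D. \<forall>y\<in>D. \<exists>z\<in>D. x \<le> z \<and> y \<le> z)"

definition scott_open :: "'a::complete_lattice set \<Rightarrow> bool" where
  "scott_open V \<longleftrightarrow> (\<forall>x y. x \<in> V \<longrightarrow> x \<le> y \<longrightarrow> y \<in> V) \<and>
     (\<forall>D. directed_set D \<longrightarrow> Sup D \<in> V \<longrightarrow> (\<exists>d\<in>D. d \<in> V))"

definition way_below :: "'a::complete_lattice \<Rightarrow> 'a \<Rightarrow> bool" (infix "\<lless>" 50) where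
  "a \<lless> b \<longleftrightarrow> (\<forall>D. directed_set D \<longrightarrow> b \<le> Sup D \<longrightarrow> (\<exists>d\<in>D. a \<le> d))"

definition continuous_lattice :: "'a::complete_lattice itself \<Rightarrow> bool" where
  "continuous_lattice _ \<longleftrightarrow>
     (\<forall>b::'a. directed_set {a. a \<lless> b} \<and> b = Sup {a. a \<lless> b})"

text \<open>The free frame on a set G, concretely: the opens of \<Sigma>^G, i.e. the upward-closed
  families (under \<subseteq>) of finite subsets of G. The generator g corresponds to
  {F. g \<in> F}.\<close>
definition fin_subsets :: "'g set \<Rightarrow> 'g set set" where
  "fin_subsets G = {F. finite F \<and> F \<subseteq> G}"

definition free_frame :: "'g set \<Rightarrow> 'g set set set" where
  "free_frame G = {U. U \<subseteq> fin_subsets G \<and>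
      (\<forall>F F'. F \<in> U \<longrightarrow> F \<subseteq> F' \<longrightarrow> F' \<in> fin_subsets G \<longrightarrow> F' \<in> U)}"

text \<open>Scott-open subsets of the free frame on G (ordered by \<subseteq>, directed joins are unions).
  These form the frame of opens of the exponential \<Sigma>^(\<Sigma>^G).\<close>
definition scott_open_free :: "'g set \<Rightarrow> 'g set set set \<Rightarrow> bool" where
  "scott_open_free G V \<longleftrightarrow> V \<subseteq> free_frame G \<and>
     (\<forall>U U'. U \<in> V \<longrightarrow> U' \<in> free_frame G \<longrightarrow> U \<subseteq> U' \<longrightarrow> U' \<in> V) \<and>
     (\<forall>D. D \<subseteq> free_frame G \<longrightarrow> D \<noteq> {} \<longrightarrow>
          (\<forall>x\<in>D. \<forall>y\<in>D. \<exists>z\<in>D. x \<subseteq> z \<and> y \<subseteq> z) \<longrightarrow>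
          \<Union>D \<in> V \<longrightarrow> (\<exists>d\<in>D. d \<in> V))"

text \<open>A frame presentation \<langle>G | R\<rangle> of the frame 'a amounts to a surjective frame
  homomorphism from the free frame on G onto 'a (the quotient map).\<close>
definition presentation_map :: "'g set \<Rightarrow> ('g set set \<Rightarrow> 'a::complete_lattice) \<Rightarrow> bool" where
  "presentation_map G f \<longleftrightarrow>
     f (fin_subsets G) = top \<and>
     (\<forall>U\<in>free_frame G. \<forall>U'\<in>free_frame G. f (U \<inter> U') = inf (f U) (f U')) \<and>
     (\<forall>S. S \<subseteq> free_frame G \<longrightarrow> f (\<Union>S) = Sup (f ` S)) \<and>
     f ` free_frame G = UNIV"

text \<open>A locale map e : \<Sigma>^(\<Sigma>^G) \<rightarrow> (Scott locale of 'a), given by its frame homomorphism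
  e* from the Scott opens of 'a to the Scott opens of the free frame on G.\<close>
definition scott_locale_map :: "'g set \<Rightarrow> ('a::complete_lattice set \<Rightarrow> 'g set set set) \<Rightarrow> bool" where
  "scott_locale_map G e \<longleftrightarrow>
     (\<forall>V. scott_open V \<longrightarrow> scott_open_free G (e V)) \<and>
     e UNIV = free_frame G \<and>
     (\<forall>V W. scott_open V \<longrightarrow> scott_open W \<longrightarrow> e (V \<inter> W) = e V \<inter> e W) \<and>
     (\<forall>S. (\<forall>V\<in>S. scott_open V) \<longrightarrow> e (\<Union>S) = \<Union>(e ` S))"

definition semi_open_quotient :: "'g set \<Rightarrow> ('a::complete_lattice set \<Rightarrow> 'g set set set) \<Rightarrow> bool" where
  "semi_open_quotient G e \<longleftrightarrow> scott_locale_map G e \<and>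
     (\<exists>r :: 'g set set set \<Rightarrow> 'a set.
        (\<forall>V. scott_open_free G V \<longrightarrow> scott_open (r V)) \<and>
        (\<forall>S. (\<forall>V\<in>S. scott_open_free G V) \<longrightarrow> r (\<Union>S) = \<Union>(r ` S)) \<and>
        (\<forall>V. scott_open V \<longrightarrow> r (e V) = V))"

end

theory Submission
  imports Defs
begin

text \<open>The Scott opens of the free frame on G are unions of the basic opens
  \<open>\<up>P = {U. P \<subseteq> U}\<close>, P a finite family of finite sets, and each \<open>\<up>P\<close> is compact because it
  has a least element, the upward closure of P. Suppose \<open>\<not> b \<le> s\<close> for \<open>s = \<Squnion>{a. a \<lless> b}\<close> and let
  \<open>V = {x. \<not> x \<le> s}\<close>. Decomposing \<open>e\<^sup>*V\<close> into basic opens and applying the join-preserving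
  retraction r puts b into some \<open>O = r(\<up>P)\<close> with \<open>\<up>P \<subseteq> e\<^sup>*V\<close>. If V were covered by the Scott
  opens \<open>{x. \<not> x \<le> y}\<close>, \<open>y \<in> O\<close>, compactness would put \<open>\<up>P\<close> inside a single one of their
  images under \<open>e\<^sup>*\<close>, and \<open>r \<circ> e\<^sup>* = id\<close> would give \<open>y \<in> O \<subseteq> {x. \<not> x \<le> y}\<close>. So some
  \<open>x \<in> V\<close> is a lower bound of the Scott open \<open>O \<ni> b\<close>; such an x is way below b, hence \<open>x \<le> s\<close>,
  contradicting \<open>x \<in> V\<close>.\<close>

definition upclosure :: "'g set \<Rightarrow> 'g set set \<Rightarrow> 'g set set" where
  "upclosure G P = {F \<in> fin_subsets G. \<exists>F0\<in>P. F0 \<subseteq> F}"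

definition basic_open :: "'g set \<Rightarrow> 'g set set \<Rightarrow> 'g set set set" where
  "basic_open G P = {U \<in> free_frame G. P \<subseteq> U}"

lemma upclosure_in_free_frame: "P \<subseteq> fin_subsets G \<Longrightarrow> upclosure G P \<in> free_frame G"
  unfolding upclosure_def free_frame_def by blast

lemma upclosure_least: "U \<in> free_frame G \<Longrightarrow> P \<subseteq> U \<Longrightarrow> upclosure G P \<subseteq> U"
  unfolding upclosure_def free_frame_def by blast

lemma upclosure_in_basic_open:
  "P \<subseteq> fin_subsets G \<Longrightarrow> upclosure G P \<in> basic_open G P"
  unfolding basic_open_def upclosure_def free_frame_def by blast

lemma finite_subset_Union_directed:
  assumes "finite P" "D \<noteq> {}" "\<forall>x\<in>D. \<forall>y\<in>D. \<exists>z\<in>D. x \<subseteq> z \<and> y \<subseteq> z" "P \<subseteq> \<Union>D"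
  shows "\<exists>d\<in>D. P \<subseteq> d"
  using assms(1,4)
proof (induction P rule: finite_induct)
  case empty
  from assms(2) show ?case by blast
next
  case (insert x F)
  then obtain d d' where d: "d \<in> D" "F \<subseteq> d" and d': "d' \<in> D" "x \<in> d'" by auto
  with assms(3) obtain z where "z \<in> D" "d \<subseteq> z" "d' \<subseteq> z" by blast
  with d d' show ?case by blast
qed

lemma scott_open_free_subset: "scott_open_free G V \<Longrightarrow> V \<subseteq> free_frame G"
  unfolding scott_open_free_def by (rule conjunct1)

lemma scott_open_free_upward:
  assumes "scott_open_free G V" "U \<in> V" "U' \<in> free_frame G" "U \<subseteq> U'"
  shows "U' \<in> V"
proof -
  have "\<forall>U U'. U \<in> V \<longrightarrow> U' \<in> free_frame G \<longrightarrow> U \<subseteq> U' \<longrightarrow> U' \<in> V"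
    using assms(1) unfolding scott_open_free_def by (rule conjunct1[OF conjunct2])
  with assms(2-4) show ?thesis by blast
qed

lemma scott_open_free_basic_open:
  assumes "finite P"
  shows "scott_open_free G (basic_open G P)"
  unfolding scott_open_free_def
proof (intro conjI allI impI)
  fix D assume D: "D \<subseteq> free_frame G" "D \<noteq> {}"
    "\<forall>x\<in>D. \<forall>y\<in>D. \<exists>z\<in>D. x \<subseteq> z \<and> y \<subseteq> z" "\<Union>D \<in> basic_open G P"
  then obtain d where "d \<in> D" "P \<subseteq> d"
    using finite_subset_Union_directed[OF assms D(2,3)] unfolding basic_open_def by blast
  with D(1) show "\<exists>d\<in>D. d \<in> basic_open G P" unfolding basic_open_def by blast
qed (auto simp: basic_open_def)

lemma scott_open_free_directed:
  assumes "scott_open_free G V" "D \<subseteq> free_frame G" "D \<noteq> {}"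
    "\<forall>x\<in>D. \<forall>y\<in>D. \<exists>z\<in>D. x \<subseteq> z \<and> y \<subseteq> z" "\<Union>D \<in> V"
  shows "\<exists>d\<in>D. d \<in> V"
proof -
  have "\<forall>D. D \<subseteq> free_frame G \<longrightarrow> D \<noteq> {} \<longrightarrow>
      (\<forall>x\<in>D. \<forall>y\<in>D. \<exists>z\<in>D. x \<subseteq> z \<and> y \<subseteq> z) \<longrightarrow> \<Union>D \<in> V \<longrightarrow> (\<exists>d\<in>D. d \<in> V)"
    using assms(1) unfolding scott_open_free_def by (rule conjunct2[OF conjunct2])
  with assms(2-5) show ?thesis by blast
qed

lemma basic_open_subset_if_upclosure_in:
  assumes "scott_open_free G V" "upclosure G P \<in> V"
  shows "basic_open G P \<subseteq> V"
proof
  fix U assume "U \<in> basic_open G P"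
  then have "U \<in> free_frame G" "upclosure G P \<subseteq> U"
    using upclosure_least unfolding basic_open_def by blast+
  then show "U \<in> V" using scott_open_free_upward[OF assms] by blast
qed

lemma basic_open_compact:
  assumes "P \<subseteq> fin_subsets G" "\<forall>V\<in>S. scott_open_free G V" "basic_open G P \<subseteq> \<Union>S"
  shows "\<exists>V\<in>S. basic_open G P \<subseteq> V"
proof -
  obtain V where "V \<in> S" "upclosure G P \<in> V"
    using assms(1,3) upclosure_in_basic_open by blast
  then show ?thesis using basic_open_subset_if_upclosure_in assms(2) by blast
qed

lemma upclosure_mono: "P \<subseteq> Q \<Longrightarrow> upclosure G P \<subseteq> upclosure G Q"
  unfolding upclosure_def by blast

lemma free_frame_Union_upclosures:
  assumes "U \<in> free_frame G"
  shows "\<Union>{upclosure G P | P. finite P \<and> P \<subseteq> U} = U"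
proof
  show "\<Union>{upclosure G P | P. finite P \<and> P \<subseteq> U} \<subseteq> U"
    using upclosure_least[OF assms] by auto
  show "U \<subseteq> \<Union>{upclosure G P | P. finite P \<and> P \<subseteq> U}"
  proof
    fix F assume F: "F \<in> U"
    then have "F \<in> upclosure G {F}"
      using assms by (auto simp: upclosure_def free_frame_def)
    moreover have "upclosure G {F} \<in> {upclosure G P | P. finite P \<and> P \<subseteq> U}"
      using F by auto
    ultimately show "F \<in> \<Union>{upclosure G P | P. finite P \<and> P \<subseteq> U}" by (rule UnionI[rotated])
  qed
qed

lemma scott_open_free_Union_basic_opens:
  assumes "scott_open_free G V"
  shows "V = \<Union>(basic_open G ` {P. finite P \<and> P \<subseteq> fin_subsets G \<and> basic_open G P \<subseteq> V})"
    (is "V = \<Union>(basic_open G ` ?Ps)")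
proof
  show "V \<subseteq> \<Union>(basic_open G ` ?Ps)"
  proof
    fix U assume "U \<in> V"
    then have U: "U \<in> free_frame G" "U \<subseteq> fin_subsets G"
      using scott_open_free_subset[OF assms] unfolding free_frame_def by blast+
    define D where "D = {upclosure G P | P. finite P \<and> P \<subseteq> U}"
    have "D \<subseteq> free_frame G"
      using U(2) upclosure_in_free_frame unfolding D_def by blast
    moreover have "D \<noteq> {}" unfolding D_def by blast
    moreover have "\<forall>x\<in>D. \<forall>y\<in>D. \<exists>z\<in>D. x \<subseteq> z \<and> y \<subseteq> z"
    proof (intro ballI)
      fix x y assume "x \<in> D" "y \<in> D"
      then obtain P Q where PQ: "x = upclosure G P" "y = upclosure G Q"
        "finite P" "P \<subseteq> U" "finite Q" "Q \<subseteq> U" unfolding D_def by blast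
      then have "upclosure G (P \<union> Q) \<in> D" unfolding D_def by blast
      moreover have "x \<subseteq> upclosure G (P \<union> Q)" "y \<subseteq> upclosure G (P \<union> Q)"
        unfolding PQ by (simp_all add: upclosure_mono)
      ultimately show "\<exists>z\<in>D. x \<subseteq> z \<and> y \<subseteq> z" by blast
    qed
    moreover have "\<Union>D \<in> V"
      using free_frame_Union_upclosures[OF U(1)] \<open>U \<in> V\<close> unfolding D_def by simp
    ultimately obtain d where "d \<in> D" "d \<in> V"
      using scott_open_free_directed[OF assms] by blast
    then obtain P where P: "finite P" "P \<subseteq> U" "upclosure G P \<in> V"
      unfolding D_def by blast
    have "P \<in> ?Ps"
      using P(1,2) U(2) basic_open_subset_if_upclosure_in[OF assms P(3)] by blast
    moreover have "U \<in> basic_open G P" using U(1) P(2) unfolding basic_open_def by blast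
    ultimately show "U \<in> \<Union>(basic_open G ` ?Ps)" by blast
  qed
  show "\<Union>(basic_open G ` ?Ps) \<subseteq> V" by blast
qed

lemma scott_open_not_le: "scott_open {x::'a::complete_lattice. \<not> x \<le> c}"
  unfolding scott_open_def by (auto intro: order_trans Sup_least)

lemma way_below_le:
  assumes "(a::'a::complete_lattice) \<lless> b"
  shows "a \<le> b"
proof -
  have "directed_set {b}" unfolding directed_set_def by simp
  with assms show ?thesis unfolding way_below_def by fastforce
qed

lemma bot_way_below: "(bot::'a::complete_lattice) \<lless> b"
  unfolding way_below_def directed_set_def by (simp add: ex_in_conv)

lemma sup_way_below:
  assumes "(x::'a::complete_lattice) \<lless> b" "y \<lless> b"
  shows "sup x y \<lless> b"
  unfolding way_below_def
proof (intro allI impI)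
  fix D :: "'a set" assume D: "directed_set D" "b \<le> Sup D"
  then obtain d1 d2 where "d1 \<in> D" "x \<le> d1" "d2 \<in> D" "y \<le> d2"
    using assms unfolding way_below_def by blast
  moreover from this D(1) obtain z where "z \<in> D" "d1 \<le> z" "d2 \<le> z"
    unfolding directed_set_def by blast
  ultimately show "\<exists>d\<in>D. sup x y \<le> d" by (meson le_sup_iff order_trans)
qed

lemma directed_way_below: "directed_set {a::'a::complete_lattice. a \<lless> b}"
  unfolding directed_set_def using bot_way_below sup_way_below sup_ge1 sup_ge2
  by (metis (mono_tags) empty_iff mem_Collect_eq)

lemma continuous_latticeI:
  assumes "\<And>b::'a::complete_lattice. b \<le> Sup {a. a \<lless> b}"
  shows "continuous_lattice TYPE('a)"
  unfolding continuous_lattice_def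
  using assms directed_way_below way_below_le by (blast intro: antisym Sup_least)

lemma lower_bound_of_scott_open_way_below:
  assumes "scott_open A" "b \<in> A" "\<forall>y\<in>A. x \<le> y"
  shows "x \<lless> b"
  unfolding way_below_def
proof (intro allI impI)
  fix D assume "directed_set D" "b \<le> Sup D"
  with assms(1,2) obtain d where "d \<in> D" "d \<in> A" unfolding scott_open_def by blast
  with assms(3) show "\<exists>d\<in>D. x \<le> d" by blast
qed

locale scott_retraction =
  fixes G :: "'g set" and e :: "'a::complete_lattice set \<Rightarrow> 'g set set set"
    and r :: "'g set set set \<Rightarrow> 'a set"
  assumes locale_map: "scott_locale_map G e"
    and r_open: "\<And>V. scott_open_free G V \<Longrightarrow> scott_open (r V)"
    and r_Union: "\<And>S. \<forall>V\<in>S. scott_open_free G V \<Longrightarrow> r (\<Union>S) = \<Union>(r ` S)"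
    and r_e: "\<And>V. scott_open V \<Longrightarrow> r (e V) = V"

lemma semi_open_quotient_retraction:
  assumes "semi_open_quotient G e"
  shows "\<exists>r. scott_retraction G e r"
proof -
  obtain r where r: "\<forall>V. scott_open_free G V \<longrightarrow> scott_open (r V)"
      "\<forall>S. (\<forall>V\<in>S. scott_open_free G V) \<longrightarrow> r (\<Union>S) = \<Union>(r ` S)"
      "\<forall>V. scott_open V \<longrightarrow> r (e V) = V"
    using assms unfolding semi_open_quotient_def by (elim conjE exE)
  have "scott_retraction G e r"
    using assms unfolding semi_open_quotient_def by unfold_locales (use r in auto)
  then show ?thesis by blast
qed

context scott_retraction
begin

lemma e_open: "scott_open V \<Longrightarrow> scott_open_free G (e V)"
  using conjunct1[OF locale_map[unfolded scott_locale_map_def]] by simp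

lemma e_Union: "\<forall>V\<in>S. scott_open V \<Longrightarrow> e (\<Union>S) = \<Union>(e ` S)"
  using conjunct2[OF conjunct2[OF conjunct2[OF locale_map[unfolded scott_locale_map_def]]]] by simp

lemma e_subset_Union:
  assumes "scott_open V" "\<forall>W\<in>S. scott_open W" "V \<subseteq> \<Union>S"
  shows "e V \<subseteq> \<Union>(e ` S)"
proof -
  have "\<Union>(e ` S) = e (\<Union>S)" using e_Union[OF assms(2)] by simp
  also have "\<dots> = e (\<Union>(insert V S))" using assms(3) by (simp add: sup.absorb2)
  also have "\<dots> = e V \<union> \<Union>(e ` S)" using e_Union[of "insert V S"] assms(1,2) by simp
  finally show ?thesis by blast
qed

lemma r_mono:
  assumes "scott_open_free G V" "scott_open_free G W" "V \<subseteq> W"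
  shows "r V \<subseteq> r W"
proof -
  have "r W = r (\<Union>{V, W})" using assms(3) by (simp add: sup.absorb2)
  also have "\<dots> = r V \<union> r W" using r_Union[of "{V, W}"] assms(1,2) by simp
  finally show ?thesis by blast
qed

lemma retract_basic_open_subset:
  assumes "finite P" "scott_open W" "basic_open G P \<subseteq> e W"
  shows "r (basic_open G P) \<subseteq> W"
  using r_mono[OF scott_open_free_basic_open[OF assms(1)] e_open[OF assms(2)] assms(3)]
    r_e[OF assms(2)] by simp

lemma retract_basic_open_lower_bound:
  assumes "finite P" "P \<subseteq> fin_subsets G" "scott_open V" "basic_open G P \<subseteq> e V"
  shows "\<exists>x\<in>V. \<forall>y\<in>r (basic_open G P). x \<le> y"
proof (rule ccontr)
  let ?O = "r (basic_open G P)" and ?nle = "\<lambda>y. {x::'a. \<not> x \<le> y}"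
  have opens: "\<forall>W\<in>?nle ` ?O. scott_open W" using scott_open_not_le by blast
  assume "\<not> ?thesis"
  then have "V \<subseteq> \<Union>(?nle ` ?O)" by auto
  then have "e V \<subseteq> \<Union>(e ` ?nle ` ?O)" by (rule e_subset_Union[OF assms(3) opens])
  with assms(4) have cover: "basic_open G P \<subseteq> \<Union>(e ` ?nle ` ?O)" by (rule order_trans)
  have "\<forall>W\<in>e ` ?nle ` ?O. scott_open_free G W" using opens e_open by blast
  from basic_open_compact[OF assms(2) this cover]
  obtain y where "y \<in> ?O" "basic_open G P \<subseteq> e (?nle y)" by blast
  moreover have "\<not> y \<le> y" if "y \<in> ?O" "basic_open G P \<subseteq> e (?nle y)"
    using retract_basic_open_subset[OF assms(1) scott_open_not_le that(2)] that(1) by blast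
  ultimately show False by simp
qed

lemma le_Sup_way_below: "(b::'a) \<le> Sup {a. a \<lless> b}"
proof (rule ccontr)
  define V where "V = {x. \<not> x \<le> Sup {a. a \<lless> b}}"
  define Ps where "Ps = {P. finite P \<and> P \<subseteq> fin_subsets G \<and> basic_open G P \<subseteq> e V}"
  have V: "scott_open V" unfolding V_def by (rule scott_open_not_le)
  have opens: "\<forall>W\<in>basic_open G ` Ps. scott_open_free G W"
    using scott_open_free_basic_open unfolding Ps_def by blast
  assume "\<not> b \<le> Sup {a. a \<lless> b}"
  then have "b \<in> r (e V)" using r_e[OF V] unfolding V_def by blast
  also have "\<dots> = r (\<Union>(basic_open G ` Ps))"
    using scott_open_free_Union_basic_opens[OF e_open[OF V]] unfolding Ps_def by simp
  also have "\<dots> = \<Union>(r ` basic_open G ` Ps)" by (rule r_Union[OF opens])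
  finally obtain P where P: "finite P" "P \<subseteq> fin_subsets G" "basic_open G P \<subseteq> e V"
      and b: "b \<in> r (basic_open G P)"
    unfolding Ps_def by blast
  obtain x where x: "x \<in> V" "\<forall>y\<in>r (basic_open G P). x \<le> y"
    using retract_basic_open_lower_bound[OF P(1,2) V P(3)] by blast
  have "x \<lless> b"
    using lower_bound_of_scott_open_way_below[OF r_open[OF scott_open_free_basic_open[OF P(1)]] b x(2)] .
  with x(1) show False unfolding V_def by (simp add: Sup_upper)
qed

end

theorem proposition3p9:
  fixes G :: "'g set" and f :: "'g set set \<Rightarrow> 'a::complete_lattice"
  assumes "is_frame TYPE('a)"
    and "presentation_map G f"
    and "\<exists>e :: 'a set \<Rightarrow> 'g set set set. semi_open_quotient G e"
  shows "continuous_lattice TYPE('a)"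
proof -
  obtain e :: "'a set \<Rightarrow> 'g set set set" and r where "scott_retraction G e r"
    using assms(3) semi_open_quotient_retraction by blast
  then show ?thesis by (rule continuous_latticeI[OF scott_retraction.le_Sup_way_below])
qed

end
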